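(* Let $\mathcal{G}_1,\dots,\mathcal{G}_m$ be signed digraphs on $\{1,\dots,n\}$ with signed Laplacians $L_1,\dots,L_m$. If for every $k\in\{1,\dots,m\}$ the matrix $-L_k$ is EEP and normal, then $\mathbb{L}=\{L_1,\dots,L_m\}$ is a consensus set for the switched system $\dot{\mathbf{x}}=-L_{\sigma(t)}\mathbf{x}$.
   Context: For a signed digraph with real weighted adjacency matrix $A$ (entries of any sign), the signed Laplacian is $L=\Sigma-A$, $\Sigma=\mathrm{diag}(\sigma_i)$, $\sigma_i=\sum_jA_{ij}$, so $L\mathbf{1}=0$. $M$ is EEP if there is $t_0\ge0$ with $e^{Mt}$ entrywise positive for all real $t\ge t_0$; $M$ is normal if $MM^\top=M^\top M$. A switching signal is a piecewise constant map $\sigma:[0,\infty)\to\{1,\dots,m\}$ with finitely many discontinuities on every bounded interval. $\mathbb{L}$ is a consensus set if for every switching signal and every $\mathbf{x}(0)\in\mathbb{R}^n$ there is $\alpha\in\mathbb{R}$ with $\lim_{t\to\infty}\mathbf{x}(t)=\alpha\mathbf{1}$. *)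

theory Defs
  imports "HOL-Analysis.Analysis"
begin

text \<open>Vertices {1..n} are modelled by a finite index type 'n with CARD('n) = n;
  n x n real matrices are real^'n^'n with matrix product **.\<close>

definition matpow :: "real^'n^'n \<Rightarrow> nat \<Rightarrow> real^'n^'n" where
  "matpow M k = ((\<lambda>X. M ** X) ^^ k) (mat 1)"

definition mexp :: "real^'n^'n \<Rightarrow> real^'n^'n" where
  "mexp M = (\<Sum>k. (1 / fact k) *\<^sub>R matpow M k)"

definition signed_laplacian :: "real^'n^'n \<Rightarrow> real^'n^'n" where
  "signed_laplacian A = (\<chi> i j. (if i = j then (\<Sum>k\<in>UNIV. A $ i $ k) else 0) - A $ i $ j)"

definition EEP :: "real^'n^'n \<Rightarrow> bool" where
  "EEP M \<longleftrightarrow> (\<exists>t0\<ge>0. \<forall>t\<ge>t0. \<forall>i j. mexp (t *\<^sub>R M) $ i $ j > 0)"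

definition normal_matrix :: "real^'n^'n \<Rightarrow> bool" where
  "normal_matrix M \<longleftrightarrow> M ** transpose M = transpose M ** M"

definition locally_finite_set :: "real set \<Rightarrow> bool" where
  "locally_finite_set D \<longleftrightarrow> (\<forall>T. finite (D \<inter> {0..T}))"

definition switching_signal :: "nat \<Rightarrow> (real \<Rightarrow> nat) \<Rightarrow> bool" where
  "switching_signal m \<sigma> \<longleftrightarrow>
     (\<forall>t\<ge>0. \<sigma> t \<in> {1..m}) \<and>
     (\<exists>D. locally_finite_set D \<and>
        (\<forall>t\<ge>0. t \<notin> D \<longrightarrow> (\<exists>e>0. \<forall>s\<ge>0. \<bar>s - t\<bar> < e \<longrightarrow> \<sigma> s = \<sigma> t)))"

definition switched_solution ::
    "(nat \<Rightarrow> real^'n^'n) \<Rightarrow> (real \<Rightarrow> nat) \<Rightarrow> (real \<Rightarrow> real^'n) \<Rightarrow> bool" where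
  "switched_solution L \<sigma> x \<longleftrightarrow>
     continuous_on {0..} x \<and>
     (\<exists>S. locally_finite_set S \<and>
        (\<forall>t\<ge>0. t \<notin> S \<longrightarrow>
           (x has_vector_derivative (- (L (\<sigma> t) *v x t))) (at t within {0..})))"

definition consensus_set :: "nat \<Rightarrow> (nat \<Rightarrow> real^'n^'n) \<Rightarrow> bool" where
  "consensus_set m L \<longleftrightarrow>
     (\<forall>\<sigma> x. switching_signal m \<sigma> \<longrightarrow> switched_solution L \<sigma> x \<longrightarrow>
        (\<exists>\<alpha>::real. (x \<longlongrightarrow> (\<chi> i. \<alpha>)) at_top))"

end

theory Submission
  imports Defs
begin

text \<open>Every mode preserves the sum of the states: \<open>L\<^sub>k 1 = 0\<close> by construction and,
  \<open>-L\<^sub>k\<close> being normal, also \<open>L\<^sub>k\<^sup>T 1 = 0\<close>. Hence the disagreement \<open>x - \<alpha> 1\<close>, with \<open>\<alpha>\<close> the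
  initial average, stays orthogonal to the all-ones vector \<open>1\<close>. For large \<open>t\<close> the matrix
  \<open>P = exp (-t L\<^sub>k)\<close> is positive and doubly stochastic, so it strictly shrinks every nonzero
  vector orthogonal to \<open>1\<close>; by normality \<open>P\<^sup>T P = exp (-t (L\<^sub>k + L\<^sub>k\<^sup>T))\<close>, so the symmetric
  part of \<open>L\<^sub>k\<close> is positive definite on that complement. With \<open>\<gamma> > 0\<close> the least of the
  resulting coercivity constants over all modes, \<open>|x - \<alpha> 1|\<^sup>2\<close> decays like \<open>exp (-2 \<gamma> t)\<close>
  whatever the switching signal.\<close>

abbreviation ones :: "real^'n" where
  "ones \<equiv> \<chi> i. 1"

section \<open>Square matrices as a Banach algebra\<close>

text \<open>A copy of the square matrices with matrix multiplication as ring product and the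
  maximum absolute row sum as norm; the latter is submultiplicative with \<open>\<parallel>I\<parallel> = 1\<close>, which
  makes the library's \<open>exp\<close> and its addition law available for \<open>mexp\<close>.\<close>

typedef ('n::finite) sqmatrix = "UNIV :: (real^'n^'n) set"
  morphisms mrep mabs by simp

setup_lifting type_definition_sqmatrix

lemma matrix_add_rdistrib: "((A::real^'n^'m) + B) ** C = A ** C + B ** C"
  by (simp add: matrix_matrix_mult_def vec_eq_iff sum.distrib algebra_simps)

instantiation sqmatrix :: (finite) ring_1
begin
lift_definition zero_sqmatrix :: "'a sqmatrix" is "0" .
lift_definition one_sqmatrix :: "'a sqmatrix" is "mat 1" .
lift_definition plus_sqmatrix :: "'a sqmatrix \<Rightarrow> 'a sqmatrix \<Rightarrow> 'a sqmatrix" is "(+)" .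
lift_definition minus_sqmatrix :: "'a sqmatrix \<Rightarrow> 'a sqmatrix \<Rightarrow> 'a sqmatrix" is "(-)" .
lift_definition uminus_sqmatrix :: "'a sqmatrix \<Rightarrow> 'a sqmatrix" is "uminus" .
lift_definition times_sqmatrix :: "'a sqmatrix \<Rightarrow> 'a sqmatrix \<Rightarrow> 'a sqmatrix" is "(**)" .
instance
proof
  fix a b c :: "'a sqmatrix"
  show "a * b * c = a * (b * c)" by transfer (simp add: matrix_mul_assoc)
  show "1 * a = a" by transfer simp
  show "a * 1 = a" by transfer simp
  show "(a + b) * c = a * c + b * c" by transfer (simp add: matrix_add_rdistrib)
  show "a * (b + c) = a * b + a * c" by transfer (simp add: matrix_add_ldistrib)
  show "a + b + c = a + (b + c)" by transfer simp
  show "a + b = b + a" by transfer simp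
  show "0 + a = a" by transfer simp
  show "- a + a = 0" by transfer simp
  show "a - b = a + - b" by transfer simp
  show "(0::'a sqmatrix) \<noteq> 1"
  proof transfer
    fix i :: 'a
    have "(mat 1 :: real^'a^'a) $ i $ i = 1" by (simp add: mat_def)
    then show "(0::real^'a^'a) \<noteq> mat 1" by (metis zero_index zero_neq_one)
  qed
qed
end

instantiation sqmatrix :: (finite) real_vector
begin
lift_definition scaleR_sqmatrix :: "real \<Rightarrow> 'a sqmatrix \<Rightarrow> 'a sqmatrix" is "scaleR" .
instance
  by standard (transfer; simp add: scaleR_add_right scaleR_add_left)+
end

instance sqmatrix :: (finite) real_algebra_1
proof
  fix a :: real and x y :: "'a sqmatrix"
  show "a *\<^sub>R x * y = a *\<^sub>R (x * y)"
    by transfer (simp add: scalar_matrix_assoc)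
  show "x * a *\<^sub>R y = a *\<^sub>R (x * y)"
    by transfer (simp add: matrix_scalar_ac scalar_matrix_assoc)
qed

definition row_sum_norm :: "real^'n^'m \<Rightarrow> real" where
  "row_sum_norm A = Max (range (\<lambda>i. \<Sum>j\<in>UNIV. \<bar>A$i$j\<bar>))"

lemma row_sum_le_row_sum_norm: "(\<Sum>j\<in>UNIV. \<bar>A$i$j\<bar>) \<le> row_sum_norm A"
  unfolding row_sum_norm_def by (rule Max_ge) auto

lemma row_sum_norm_leI: "(\<And>i. (\<Sum>j\<in>UNIV. \<bar>A$i$j\<bar>) \<le> c) \<Longrightarrow> row_sum_norm A \<le> c"
  unfolding row_sum_norm_def by (rule Max.boundedI) auto

lemma row_sum_norm_attained: "\<exists>i. row_sum_norm A = (\<Sum>j\<in>UNIV. \<bar>A$i$j\<bar>)"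
proof -
  have "row_sum_norm A \<in> range (\<lambda>i. \<Sum>j\<in>UNIV. \<bar>A$i$j\<bar>)"
    unfolding row_sum_norm_def by (rule Max_in) auto
  then show ?thesis by auto
qed

lemma abs_entry_le_row_sum_norm: "\<bar>A$i$j\<bar> \<le> row_sum_norm A"
  using member_le_sum[of j UNIV "\<lambda>j. \<bar>A$i$j\<bar>"] row_sum_le_row_sum_norm[of A i] by simp

lemma row_sum_norm_nonneg: "0 \<le> row_sum_norm A"
  using abs_entry_le_row_sum_norm[of A] abs_ge_zero order_trans by blast

lemma row_sum_norm_triangle: "row_sum_norm (A + B) \<le> row_sum_norm A + row_sum_norm B"
proof (rule row_sum_norm_leI)
  fix i
  have "(\<Sum>j\<in>UNIV. \<bar>(A+B)$i$j\<bar>) \<le> (\<Sum>j\<in>UNIV. \<bar>A$i$j\<bar>) + (\<Sum>j\<in>UNIV. \<bar>B$i$j\<bar>)"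
    by (simp add: sum.distrib[symmetric] sum_mono abs_triangle_ineq)
  then show "(\<Sum>j\<in>UNIV. \<bar>(A+B)$i$j\<bar>) \<le> row_sum_norm A + row_sum_norm B"
    using row_sum_le_row_sum_norm[of A i] row_sum_le_row_sum_norm[of B i] by linarith
qed

lemma row_sum_norm_scaleR: "row_sum_norm (c *\<^sub>R A) = \<bar>c\<bar> * row_sum_norm A"
proof -
  have row: "(\<Sum>j\<in>UNIV. \<bar>(c *\<^sub>R A)$i$j\<bar>) = \<bar>c\<bar> * (\<Sum>j\<in>UNIV. \<bar>A$i$j\<bar>)" for i
    by (simp add: abs_mult sum_distrib_left)
  obtain i where i: "row_sum_norm A = (\<Sum>j\<in>UNIV. \<bar>A$i$j\<bar>)"
    using row_sum_norm_attained by blast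
  show ?thesis
  proof (rule antisym)
    show "row_sum_norm (c *\<^sub>R A) \<le> \<bar>c\<bar> * row_sum_norm A"
      by (rule row_sum_norm_leI) (subst row, simp add: mult_left_mono row_sum_le_row_sum_norm)
    show "\<bar>c\<bar> * row_sum_norm A \<le> row_sum_norm (c *\<^sub>R A)"
      using row_sum_le_row_sum_norm[of "c *\<^sub>R A" i] by (simp only: i row)
  qed
qed

lemma row_sum_norm_eq_0_iff: "row_sum_norm A = 0 \<longleftrightarrow> A = 0"
proof
  assume "row_sum_norm A = 0"
  then show "A = 0"
    using abs_entry_le_row_sum_norm[of A] by (simp add: vec_eq_iff)
next
  assume "A = 0"
  then show "row_sum_norm A = 0"
    using row_sum_norm_nonneg[of A] row_sum_norm_leI[of A 0] by simp
qed

lemma row_sum_norm_mult: "row_sum_norm (A ** B) \<le> row_sum_norm A * row_sum_norm B"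
proof (rule row_sum_norm_leI)
  fix i
  have "(\<Sum>j\<in>UNIV. \<bar>(A ** B)$i$j\<bar>) \<le> (\<Sum>j\<in>UNIV. \<Sum>k\<in>UNIV. \<bar>A$i$k\<bar> * \<bar>B$k$j\<bar>)"
    unfolding matrix_matrix_mult_def
    by (rule sum_mono) (simp, rule order_trans[OF sum_abs], simp add: abs_mult)
  also have "\<dots> = (\<Sum>k\<in>UNIV. \<bar>A$i$k\<bar> * (\<Sum>j\<in>UNIV. \<bar>B$k$j\<bar>))"
    by (subst sum.swap) (simp add: sum_distrib_left)
  also have "\<dots> \<le> (\<Sum>k\<in>UNIV. \<bar>A$i$k\<bar>) * row_sum_norm B"
    by (simp add: sum_distrib_right sum_mono mult_left_mono row_sum_le_row_sum_norm)
  also have "\<dots> \<le> row_sum_norm A * row_sum_norm B"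
    by (rule mult_right_mono[OF row_sum_le_row_sum_norm row_sum_norm_nonneg])
  finally show "(\<Sum>j\<in>UNIV. \<bar>(A ** B)$i$j\<bar>) \<le> row_sum_norm A * row_sum_norm B" .
qed

lemma row_sum_norm_mat_1: "row_sum_norm (mat 1 :: real^'n^'n) = 1"
proof -
  have "(\<Sum>j\<in>UNIV. \<bar>(mat 1 :: real^'n^'n)$i$j\<bar>) = 1" for i
    by (simp add: mat_def if_distrib sum.delta cong: if_cong)
  then show ?thesis using row_sum_norm_attained[of "mat 1 :: real^'n^'n"] by metis
qed

lemma norm_le_row_sum_norm: "norm (A::real^'n^'m) \<le> of_nat CARD('m) * row_sum_norm A"
proof -
  have "norm A \<le> (\<Sum>i\<in>UNIV. norm (A$i))"
    unfolding norm_vec_def by (rule L2_set_le_sum) simp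
  also have "\<dots> \<le> (\<Sum>i\<in>(UNIV::'m set). row_sum_norm A)"
    by (rule sum_mono) (rule order_trans[OF norm_le_l1_cart row_sum_le_row_sum_norm])
  finally show ?thesis by simp
qed

lemma row_sum_norm_le_norm: "row_sum_norm (A::real^'n^'m) \<le> of_nat CARD('n) * norm A"
proof (rule row_sum_norm_leI)
  fix i
  have "(\<Sum>j\<in>UNIV. \<bar>A$i$j\<bar>) \<le> (\<Sum>j\<in>(UNIV::'n set). norm A)"
    by (rule sum_mono) (rule order_trans[OF component_le_norm_cart Finite_Cartesian_Product.norm_nth_le])
  then show "(\<Sum>j\<in>UNIV. \<bar>A$i$j\<bar>) \<le> of_nat CARD('n) * norm A" by simp
qed

instantiation sqmatrix :: (finite) real_normed_algebra_1
begin
lift_definition norm_sqmatrix :: "'a sqmatrix \<Rightarrow> real" is row_sum_norm .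
definition dist_sqmatrix :: "'a sqmatrix \<Rightarrow> 'a sqmatrix \<Rightarrow> real" where
  "dist_sqmatrix a b = norm (a - b)"
definition sgn_sqmatrix :: "'a sqmatrix \<Rightarrow> 'a sqmatrix" where
  "sgn_sqmatrix x = scaleR (inverse (norm x)) x"
definition uniformity_sqmatrix :: "('a sqmatrix \<times> 'a sqmatrix) filter" where
  "uniformity_sqmatrix = (INF e\<in>{0 <..}. principal {(x, y). dist x y < e})"
definition open_sqmatrix :: "'a sqmatrix set \<Rightarrow> bool" where
  "open_sqmatrix S = (\<forall>x\<in>S. \<forall>\<^sub>F (x', y) in uniformity. x' = x \<longrightarrow> y \<in> S)"
instance
  by standard
    (unfold dist_sqmatrix_def open_sqmatrix_def sgn_sqmatrix_def uniformity_sqmatrix_def,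
     (rule refl | (transfer, simp add: row_sum_norm_triangle row_sum_norm_scaleR
        row_sum_norm_eq_0_iff row_sum_norm_mult row_sum_norm_mat_1))+)
end

lemma bounded_linear_mrep: "bounded_linear (mrep :: 'n::finite sqmatrix \<Rightarrow> real^'n^'n)"
proof
  fix x y :: "'n sqmatrix" and r :: real
  show "mrep (x + y) = mrep x + mrep y" by transfer simp
  show "mrep (r *\<^sub>R x) = r *\<^sub>R mrep x" by transfer simp
  show "\<exists>K. \<forall>x::'n sqmatrix. norm (mrep x) \<le> norm x * K"
    by (rule exI[of _ "of_nat CARD('n)"]) (metis norm_sqmatrix.rep_eq norm_le_row_sum_norm mult.commute)
qed

lemma bounded_linear_mabs: "bounded_linear (mabs :: real^'n^'n \<Rightarrow> 'n::finite sqmatrix)"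
proof
  fix x y :: "real^'n^'n" and r :: real
  show "mabs (x + y) = mabs x + mabs y" by (simp add: plus_sqmatrix.abs_eq)
  show "mabs (r *\<^sub>R x) = r *\<^sub>R mabs x" by (simp add: scaleR_sqmatrix.abs_eq)
  show "\<exists>K. \<forall>x. norm (mabs x :: 'n sqmatrix) \<le> norm x * K"
    by (rule exI[of _ "of_nat CARD('n)"]) (metis norm_sqmatrix.abs_eq eq_onp_same_args row_sum_norm_le_norm mult.commute)
qed

instance sqmatrix :: (finite) banach
proof
  fix X :: "nat \<Rightarrow> 'a sqmatrix"
  assume "Cauchy X"
  then have "Cauchy (\<lambda>n. mrep (X n))"
    by (rule bounded_linear.Cauchy[OF bounded_linear_mrep])
  then obtain L where "(\<lambda>n. mrep (X n)) \<longlonglongrightarrow> L"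
    using Cauchy_convergent_iff convergent_def by blast
  then have "(\<lambda>n. mabs (mrep (X n))) \<longlonglongrightarrow> mabs L"
    by (rule bounded_linear.tendsto[OF bounded_linear_mabs])
  then show "convergent X" by (auto simp: convergent_def mrep_inverse)
qed

section \<open>The matrix exponential\<close>

lemma matpow_0: "matpow M 0 = mat 1"
  by (simp add: matpow_def)

lemma matpow_Suc: "matpow M (Suc k) = M ** matpow M k"
  by (simp add: matpow_def)

lemma mrep_power: "mrep (X ^ k) = matpow (mrep X) k"
  by (induction k) (simp_all add: matpow_0 matpow_Suc one_sqmatrix.rep_eq times_sqmatrix.rep_eq)

lemma matpow_eq_mrep_power: "matpow M k = mrep (mabs M ^ k)"
  by (simp add: mrep_power mabs_inverse)

lemma matpow_Suc2: "matpow M (Suc k) = matpow M k ** M"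
  unfolding matpow_eq_mrep_power power_Suc2 by (simp add: times_sqmatrix.rep_eq mabs_inverse)

lemma sums_mrep_exp: "(\<lambda>k. (1 / fact k) *\<^sub>R matpow M k) sums mrep (exp (mabs M))"
proof -
  have "(\<lambda>k. mrep (mabs M ^ k /\<^sub>R fact k)) sums mrep (exp (mabs M))"
    by (rule bounded_linear.sums[OF bounded_linear_mrep exp_converges])
  then show ?thesis
    by (simp add: scaleR_sqmatrix.rep_eq matpow_eq_mrep_power divide_inverse)
qed

lemma sums_mexp: "(\<lambda>k. (1 / fact k) *\<^sub>R matpow M k) sums mexp M"
  unfolding mexp_def using sums_mrep_exp by (rule summable_sums[OF sums_summable])

lemma mexp_eq_mrep_exp: "mexp M = mrep (exp (mabs M))"
  using sums_mexp sums_mrep_exp by (rule sums_unique2)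

lemma mexp_add_commuting:
  assumes "A ** B = B ** A"
  shows "mexp (A + B) = mexp A ** mexp B"
proof -
  have "mabs A * mabs B = mabs B * mabs A"
    using assms by (metis mabs_inverse times_sqmatrix.rep_eq mrep_inject UNIV_I)
  moreover have "mabs (A + B) = mabs A + mabs B"
    by (simp add: plus_sqmatrix.abs_eq)
  ultimately show ?thesis
    by (simp add: mexp_eq_mrep_exp exp_add_commuting times_sqmatrix.rep_eq)
qed

lemma transpose_matpow: "transpose (matpow M k) = matpow (transpose M) k"
proof (induction k)
  case (Suc k)
  then show ?case by (subst matpow_Suc2) (simp add: matrix_transpose_mul matpow_Suc)
qed (simp add: matpow_0)

lemma transpose_add: "transpose (A + B) = transpose A + transpose (B::real^'n^'m)"
  by (simp add: transpose_def vec_eq_iff)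

lemma transpose_diff: "transpose (A - B) = transpose A - transpose (B::real^'n^'m)"
  by (simp add: transpose_def vec_eq_iff)

lemma transpose_uminus: "transpose (- A) = - transpose (A::real^'n^'m)"
  by (simp add: transpose_def vec_eq_iff)

lemma bounded_linear_transpose: "bounded_linear (transpose :: real^'n^'m \<Rightarrow> real^'m^'n)"
  by (rule linear_conv_bounded_linear[THEN iffD1], rule linearI)
    (simp_all add: transpose_add transpose_scalar)

lemma mexp_transpose: "mexp (transpose M) = transpose (mexp M)"
proof -
  have "(\<lambda>k. transpose ((1 / fact k) *\<^sub>R matpow M k)) sums transpose (mexp M)"
    by (rule bounded_linear.sums[OF bounded_linear_transpose sums_mexp])
  then have "(\<lambda>k. (1 / fact k) *\<^sub>R matpow (transpose M) k) sums transpose (mexp M)"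
    by (simp add: transpose_scalar transpose_matpow)
  then show ?thesis
    using sums_mexp by (rule sums_unique2[rotated])
qed

lemma matpow_eigenvector: "M *v v = c *\<^sub>R v \<Longrightarrow> matpow M k *v v = (c ^ k) *\<^sub>R v"
  by (induction k)
    (simp_all add: matpow_0 matpow_Suc matrix_vector_mul_assoc[symmetric] matrix_vector_mult_scaleR)

lemma mexp_eigenvector:
  fixes M :: "real^'n^'n"
  assumes "M *v v = c *\<^sub>R v"
  shows "mexp M *v v = exp c *\<^sub>R v"
proof -
  have "bounded_linear (\<lambda>A::real^'n^'n. A *v v)"
    by (rule linear_conv_bounded_linear[THEN iffD1], rule linearI)
      (simp_all add: matrix_vector_mult_add_rdistrib scaleR_matrix_vector_assoc)
  then have "(\<lambda>k. ((1 / fact k) *\<^sub>R matpow M k) *v v) sums (mexp M *v v)"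
    by (rule bounded_linear.sums[OF _ sums_mexp])
  moreover have "(\<lambda>k. ((1 / fact k) *\<^sub>R matpow M k) *v v) = (\<lambda>k. (c ^ k /\<^sub>R fact k) *\<^sub>R v)"
    using matpow_eigenvector[OF assms]
    by (simp add: scaleR_matrix_vector_assoc[symmetric] divide_inverse mult.commute)
  ultimately show ?thesis
    using sums_scaleR_left[OF exp_converges] sums_unique2 by metis
qed

section \<open>Positive doubly stochastic matrices\<close>

lemma inner_matrix_vector_transpose: "(A *v x) \<bullet> y = x \<bullet> (transpose A *v (y::real^'n))"
  by (metis transpose_matrix_vector dot_lmul_matrix inner_commute)

lemma square_weighted_mean_less:
  fixes p y :: "'a::finite \<Rightarrow> real"
  assumes pos: "\<And>j. p j > 0" and sum_eq_1: "sum p UNIV = 1" and nonconst: "y j \<noteq> y k"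
  shows "(\<Sum>j\<in>UNIV. p j * y j)\<^sup>2 < (\<Sum>j\<in>UNIV. p j * (y j)\<^sup>2)"
proof -
  define m where "m = (\<Sum>j\<in>UNIV. p j * y j)"
  have "(\<Sum>j\<in>UNIV. p j * (y j - m)\<^sup>2)
      = (\<Sum>j\<in>UNIV. p j * (y j)\<^sup>2) - 2 * m * (\<Sum>j\<in>UNIV. p j * y j) + m\<^sup>2 * sum p UNIV"
    by (simp add: power2_eq_square algebra_simps sum.distrib sum_subtractf
        sum_distrib_left sum_distrib_right)
  then have variance: "(\<Sum>j\<in>UNIV. p j * (y j - m)\<^sup>2) = (\<Sum>j\<in>UNIV. p j * (y j)\<^sup>2) - m\<^sup>2"
    by (simp add: sum_eq_1 m_def[symmetric] power2_eq_square)
  obtain i where "y i \<noteq> m"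
    using nonconst by metis
  then have "0 < p i * (y i - m)\<^sup>2"
    using pos[of i] by simp
  also have "\<dots> \<le> (\<Sum>j\<in>UNIV. p j * (y j - m)\<^sup>2)"
    by (rule member_le_sum) (simp_all add: less_imp_le[OF pos])
  finally show ?thesis
    using variance by (simp add: m_def)
qed

lemma perp_ones_nonconstant:
  assumes "ones \<bullet> y = 0" and "y \<noteq> 0"
  obtains j k where "y$j \<noteq> y$k"
proof -
  have "\<exists>j k. y$j \<noteq> y$k"
  proof (rule ccontr)
    assume "\<nexists>j k. y$j \<noteq> y$k"
    then have "y = y$undefined *\<^sub>R ones"
      by (simp add: vec_eq_iff)
    then obtain c where y_eq: "y = c *\<^sub>R ones"
      by blast
    then have "ones \<bullet> y = c * of_nat CARD('a)"
      by (simp add: inner_vec_def)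
    then have "c = 0"
      using assms(1) by simp
    then show False
      using y_eq assms(2) by simp
  qed
  then show ?thesis
    using that by blast
qed

lemma doubly_stochastic_contracts_perp_ones:
  fixes P :: "real^'n^'n"
  assumes pos: "\<And>i j. P$i$j > 0"
    and rows: "P *v ones = ones" and cols: "transpose P *v ones = ones"
    and "ones \<bullet> y = 0" and "y \<noteq> 0"
  shows "(P *v y) \<bullet> (P *v y) < y \<bullet> y"
proof -
  have row_sum: "(\<Sum>j\<in>UNIV. P$i$j) = 1" for i
    using arg_cong[OF rows, of "\<lambda>v. v$i"] by (simp add: matrix_vector_mult_def)
  have col_sum: "(\<Sum>i\<in>UNIV. P$i$j) = 1" for j
    using arg_cong[OF cols, of "\<lambda>v. v$j"] by (simp add: matrix_vector_mult_def transpose_def)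
  obtain j k where nonconst: "y$j \<noteq> y$k"
    using perp_ones_nonconstant assms(4,5) by blast
  have "(P *v y) \<bullet> (P *v y) = (\<Sum>i\<in>UNIV. (\<Sum>j\<in>UNIV. P$i$j * y$j)\<^sup>2)"
    by (simp add: inner_vec_def matrix_vector_mult_def power2_eq_square)
  also have "\<dots> < (\<Sum>i\<in>UNIV. \<Sum>j\<in>UNIV. P$i$j * (y$j)\<^sup>2)"
    using square_weighted_mean_less[of "\<lambda>j. P$_$j", OF pos row_sum nonconst]
    by (intro sum_strict_mono) auto
  also have "\<dots> = (\<Sum>j\<in>UNIV. (\<Sum>i\<in>UNIV. P$i$j) * (y$j)\<^sup>2)"
    by (subst sum.swap) (simp add: sum_distrib_right)
  also have "\<dots> = y \<bullet> y"
    by (simp add: col_sum inner_vec_def power2_eq_square)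
  finally show ?thesis .
qed

section \<open>Minimum of a symmetric quadratic form\<close>

lemma nonpos_of_le_quadratic:
  fixes a b :: real
  assumes "\<And>s. s > 0 \<Longrightarrow> a * s \<le> b * s\<^sup>2"
  shows "a \<le> 0"
proof (rule ccontr)
  assume "\<not> a \<le> 0"
  define s where "s = a / (\<bar>b\<bar> + 1)"
  have "s > 0"
    using \<open>\<not> a \<le> 0\<close> by (simp add: s_def)
  have "b * s \<le> \<bar>b\<bar> * s"
    using \<open>s > 0\<close> by (simp add: mult_right_mono)
  also have "\<dots> < a"
    using \<open>\<not> a \<le> 0\<close> by (simp add: s_def field_simps)
  finally have "b * s\<^sup>2 < a * s"
    using \<open>s > 0\<close> by (simp add: power2_eq_square)
  with assms[OF \<open>s > 0\<close>] show False
    by simp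
qed

lemma symmetric_form_commute:
  fixes T :: "real^'n^'n"
  assumes "transpose T = T"
  shows "v \<bullet> (T *v w) = w \<bullet> (T *v v)"
  by (metis assms inner_commute inner_matrix_vector_transpose)

lemma psd_on_perp_quadratic_form_zero_imp_kernel:
  fixes T :: "real^'n^'n"
  assumes sym: "transpose T = T" and Tu: "T *v u = c *\<^sub>R u"
    and psd: "\<And>z. u \<bullet> z = 0 \<Longrightarrow> 0 \<le> z \<bullet> (T *v z)"
    and "u \<bullet> y = 0" and "y \<bullet> (T *v y) = 0"
  shows "T *v y = 0"
proof -
  define z where "z = T *v y"
  have "u \<bullet> z = 0"
    using symmetric_form_commute[OF sym, of u y] Tu \<open>u \<bullet> y = 0\<close> by (simp add: z_def inner_commute)
  have "2 * (z \<bullet> z) * s \<le> (z \<bullet> (T *v z)) * s\<^sup>2" if "s > 0" for s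
  proof -
    have "(y - s *\<^sub>R z) \<bullet> (T *v (y - s *\<^sub>R z))
        = y \<bullet> (T *v y) - s * (y \<bullet> (T *v z)) - s * (z \<bullet> (T *v y)) + s\<^sup>2 * (z \<bullet> (T *v z))"
      by (simp add: matrix_vector_mult_diff_distrib matrix_vector_mult_scaleR
          inner_diff_left inner_diff_right power2_eq_square algebra_simps)
    also have "\<dots> = - 2 * s * (z \<bullet> z) + s\<^sup>2 * (z \<bullet> (T *v z))"
      using symmetric_form_commute[OF sym, of y z] assms(5) by (simp add: z_def)
    finally show ?thesis
      using psd[of "y - s *\<^sub>R z"] \<open>u \<bullet> z = 0\<close> assms(4) by (simp add: inner_diff_right mult_ac)
  qed
  then have "2 * (z \<bullet> z) \<le> 0"
    by (rule nonpos_of_le_quadratic)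
  then have "z \<bullet> z = 0"
    using inner_ge_zero[of z] by linarith
  then show ?thesis
    by (simp add: z_def)
qed

lemma symmetric_min_eigenvector_on_perp:
  fixes S :: "real^'n^'n"
  assumes sym: "transpose S = S" and Su: "S *v u = 0" and "u \<bullet> v = 0" and "v \<noteq> 0"
  obtains y \<mu> where "u \<bullet> y = 0" "y \<bullet> y = 1" "S *v y = \<mu> *\<^sub>R y"
    "\<And>z. u \<bullet> z = 0 \<Longrightarrow> \<mu> * (z \<bullet> z) \<le> z \<bullet> (S *v z)"
proof -
  define K where "K = {y. u \<bullet> y = 0} \<inter> sphere 0 1"
  have "v /\<^sub>R norm v \<in> K"
    using assms(3,4) by (simp add: K_def)
  moreover have "compact K"
    unfolding K_def by (intro closed_Int_compact closed_hyperplane compact_sphere)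
  moreover have "continuous_on K (\<lambda>y. y \<bullet> (S *v y))"
    by (intro continuous_intros linear_continuous_on matrix_vector_mul_bounded_linear)
  ultimately obtain y where "y \<in> K" and min: "\<And>w. w \<in> K \<Longrightarrow> y \<bullet> (S *v y) \<le> w \<bullet> (S *v w)"
    using continuous_attains_inf[of K "\<lambda>y. y \<bullet> (S *v y)"] by blast
  define \<mu> where "\<mu> = y \<bullet> (S *v y)"
  have "u \<bullet> y = 0" and "y \<bullet> y = 1"
    using \<open>y \<in> K\<close> by (auto simp: K_def dot_square_norm)
  have bound: "\<mu> * (z \<bullet> z) \<le> z \<bullet> (S *v z)" if "u \<bullet> z = 0" for z
  proof (cases "z = 0")
    case False
    then have "\<mu> \<le> (z /\<^sub>R norm z) \<bullet> (S *v (z /\<^sub>R norm z))"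
      using min[of "z /\<^sub>R norm z"] that by (simp add: K_def \<mu>_def)
    also have "\<dots> = (z \<bullet> (S *v z)) / (z \<bullet> z)"
      by (simp add: matrix_vector_mult_scaleR dot_square_norm power2_eq_square divide_inverse
          inverse_mult_distrib mult_ac)
    finally show ?thesis
      using False by (simp add: pos_le_divide_eq mult.commute)
  qed simp
  have shift: "(S - \<mu> *\<^sub>R mat 1) *v w = S *v w - \<mu> *\<^sub>R w" for w
    by (simp add: matrix_vector_mult_diff_rdistrib scaleR_matrix_vector_assoc[symmetric])
  have "(S - \<mu> *\<^sub>R mat 1) *v y = 0"
  proof (rule psd_on_perp_quadratic_form_zero_imp_kernel[of _ u])
    show "transpose (S - \<mu> *\<^sub>R mat 1) = S - \<mu> *\<^sub>R mat 1"
      using sym by (simp add: transpose_diff transpose_scalar)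
    show "(S - \<mu> *\<^sub>R mat 1) *v u = (- \<mu>) *\<^sub>R u"
      using Su by (simp add: shift)
    show "0 \<le> z \<bullet> ((S - \<mu> *\<^sub>R mat 1) *v z)" if "u \<bullet> z = 0" for z
      using bound[OF that] by (simp add: shift inner_diff_right)
    show "y \<bullet> ((S - \<mu> *\<^sub>R mat 1) *v y) = 0"
      using \<open>y \<bullet> y = 1\<close> unfolding shift inner_diff_right by (simp add: \<mu>_def)
  qed fact
  then have "S *v y = \<mu> *\<^sub>R y"
    by (simp add: shift)
  from \<open>u \<bullet> y = 0\<close> \<open>y \<bullet> y = 1\<close> this bound show ?thesis
    by (rule that)
qed

section \<open>Coercivity of the signed Laplacians\<close>

lemma normal_kernel_transpose:
  fixes M :: "real^'n^'n"
  assumes normal: "M ** transpose M = transpose M ** M" and "M *v v = 0"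
  shows "transpose M *v v = 0"
proof -
  have "(transpose M *v v) \<bullet> (transpose M *v v) = v \<bullet> (M *v (transpose M *v v))"
    using inner_matrix_vector_transpose[of "transpose M" v] by simp
  also have "\<dots> = v \<bullet> ((M ** transpose M) *v v)"
    by (simp only: matrix_vector_mul_assoc)
  also have "\<dots> = v \<bullet> (transpose M *v (M *v v))"
    by (simp only: normal matrix_vector_mul_assoc)
  also have "\<dots> = 0"
    by (simp add: assms(2))
  finally show ?thesis
    by simp
qed

lemma scaleR_matrix_mult: "(a *\<^sub>R A) ** (b *\<^sub>R B) = (a * b) *\<^sub>R (A ** (B::real^'p^'n))"
  by (simp add: matrix_matrix_mult_def vec_eq_iff sum_distrib_left algebra_simps)

lemma uminus_matrix_mult_uminus: "(- A) ** (- B) = A ** (B::real^'p^'n)"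
  by (simp add: matrix_matrix_mult_def vec_eq_iff)

lemma normal_matrix_uminus: "normal_matrix (- M) \<longleftrightarrow> normal_matrix M"
  by (simp add: normal_matrix_def transpose_uminus uminus_matrix_mult_uminus)

lemma uminus_matrix_vector_mult: "(- A) *v v = - (A *v (v::real^'n))"
  by (simp add: matrix_vector_mult_def vec_eq_iff sum_negf)

lemma signed_laplacian_ones: "signed_laplacian A *v ones = 0"
  by (simp add: signed_laplacian_def matrix_vector_mult_def vec_eq_iff sum_subtractf
      sum.delta sum.delta')

lemma signed_laplacian_transpose_ones:
  assumes "normal_matrix (- signed_laplacian A)"
  shows "transpose (signed_laplacian A) *v ones = 0"
  using normal_matrix_uminus[THEN iffD1, OF assms] unfolding normal_matrix_def
  by (rule normal_kernel_transpose[OF _ signed_laplacian_ones])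

text \<open>By normality \<open>exp (-t L\<^sup>T) exp (-t L) = exp (-t (L + L\<^sup>T))\<close>, and the left side strictly
  shrinks the squared norm of \<open>y\<close>; on the eigenvector \<open>y\<close> this says \<open>exp (-t \<mu>) < 1\<close>.\<close>

lemma symmetric_part_eigenvalue_pos:
  fixes L :: "real^'n^'n"
  assumes L1: "L *v ones = 0" and LT1: "transpose L *v ones = 0"
    and normal: "L ** transpose L = transpose L ** L"
    and "t > 0" and pos: "\<And>i j. mexp (t *\<^sub>R - L) $ i $ j > 0"
    and "ones \<bullet> y = 0" and "y \<noteq> 0" and eig: "(L + transpose L) *v y = \<mu> *\<^sub>R y"
  shows "\<mu> > 0"
proof -
  define P where "P = mexp ((- t) *\<^sub>R L)"
  have PT: "transpose P = mexp ((- t) *\<^sub>R transpose L)"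
    by (simp only: P_def mexp_transpose[symmetric] transpose_scalar)
  have P1: "P *v ones = ones"
    using mexp_eigenvector[of "(- t) *\<^sub>R L" ones 0] L1
    by (simp add: P_def scaleR_matrix_vector_assoc[symmetric] uminus_matrix_vector_mult)
  have PT1: "transpose P *v ones = ones"
    using mexp_eigenvector[of "(- t) *\<^sub>R transpose L" ones 0] LT1
    by (simp add: PT scaleR_matrix_vector_assoc[symmetric] uminus_matrix_vector_mult
        del: transpose_matrix_vector)
  have "((- t) *\<^sub>R transpose L) ** ((- t) *\<^sub>R L) = ((- t) *\<^sub>R L) ** ((- t) *\<^sub>R transpose L)"
    by (simp only: scaleR_matrix_mult normal)
  then have "transpose P ** P = mexp ((- t) *\<^sub>R transpose L + (- t) *\<^sub>R L)"
    by (simp only: PT, simp only: P_def mexp_add_commuting)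
  also have "\<dots> = mexp ((- t) *\<^sub>R (L + transpose L))"
    by (simp add: scaleR_add_right add.commute)
  finally have "(P *v y) \<bullet> (P *v y) = exp (- t * \<mu>) * (y \<bullet> y)"
    using mexp_eigenvector[of "(- t) *\<^sub>R (L + transpose L)" y "- t * \<mu>"] eig
    by (simp add: inner_matrix_vector_transpose matrix_vector_mul_assoc
        scaleR_matrix_vector_assoc[symmetric] uminus_matrix_vector_mult del: transpose_matrix_vector)
  moreover have "(P *v y) \<bullet> (P *v y) < y \<bullet> y"
    using pos P1 PT1 assms(6,7) by (intro doubly_stochastic_contracts_perp_ones) (simp_all add: P_def)
  ultimately have "exp (- t * \<mu>) < 1"
    using \<open>y \<noteq> 0\<close> by simp
  then show ?thesis
    using \<open>t > 0\<close> by (simp add: zero_less_mult_iff)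
qed

lemma coercive_on_perp_ones:
  fixes L :: "real^'n^'n"
  assumes L1: "L *v ones = 0" and "EEP (- L)" and "normal_matrix (- L)"
  obtains \<gamma> where "\<gamma> > 0" "\<And>y. ones \<bullet> y = 0 \<Longrightarrow> \<gamma> * (y \<bullet> y) \<le> y \<bullet> (L *v y)"
proof (cases "\<exists>v::real^'n. ones \<bullet> v = 0 \<and> v \<noteq> 0")
  case False
  show ?thesis
  proof (rule that[of 1])
    show "1 * (y \<bullet> y) \<le> y \<bullet> (L *v y)" if "ones \<bullet> y = 0" for y
    proof -
      have "y = 0"
        using False that by blast
      then show ?thesis
        by simp
    qed
  qed simp
next
  case True
  then obtain v :: "real^'n" where "ones \<bullet> v = 0" "v \<noteq> 0"
    by blast
  obtain t0 where "t0 \<ge> 0" and pos: "\<And>t i j. t \<ge> t0 \<Longrightarrow> mexp (t *\<^sub>R - L) $ i $ j > 0"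
    using \<open>EEP (- L)\<close> unfolding EEP_def by blast
  have normal: "L ** transpose L = transpose L ** L"
    using \<open>normal_matrix (- L)\<close> unfolding normal_matrix_uminus by (simp only: normal_matrix_def)
  have LT1: "transpose L *v ones = 0"
    by (rule normal_kernel_transpose[OF normal L1])
  define S where "S = L + transpose L"
  have "transpose S = S"
    by (simp add: S_def transpose_add add.commute)
  moreover have "S *v ones = 0"
    by (simp only: S_def matrix_vector_mult_add_rdistrib L1 LT1 add_0)
  ultimately obtain y \<mu> where "ones \<bullet> y = 0" "y \<bullet> y = 1" "S *v y = \<mu> *\<^sub>R y"
    and min: "\<And>z. ones \<bullet> z = 0 \<Longrightarrow> \<mu> * (z \<bullet> z) \<le> z \<bullet> (S *v z)"
    by (rule symmetric_min_eigenvector_on_perp[OF _ _ \<open>ones \<bullet> v = 0\<close> \<open>v \<noteq> 0\<close>]) (rule that)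
  have "y \<noteq> 0"
    using \<open>y \<bullet> y = 1\<close> by auto
  have eig: "(L + transpose L) *v y = \<mu> *\<^sub>R y"
    using \<open>S *v y = \<mu> *\<^sub>R y\<close> by (simp only: S_def)
  have "0 < t0 + 1"
    using \<open>t0 \<ge> 0\<close> by simp
  have pos': "mexp ((t0 + 1) *\<^sub>R - L) $ i $ j > 0" for i j
    by (rule pos) simp
  have "\<mu> > 0"
    by (rule symmetric_part_eigenvalue_pos[OF L1 LT1 normal \<open>0 < t0 + 1\<close> pos'
          \<open>ones \<bullet> y = 0\<close> \<open>y \<noteq> 0\<close> eig])
  have S_form: "z \<bullet> (S *v z) = 2 * (z \<bullet> (L *v z))" for z
    using inner_matrix_vector_transpose[of L z z]
    by (simp add: S_def matrix_vector_mult_add_rdistrib inner_add_right inner_commute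
        del: transpose_matrix_vector)
  show ?thesis
  proof (rule that[of "\<mu> / 2"])
    show "\<mu> / 2 > 0"
      using \<open>\<mu> > 0\<close> by simp
    show "\<mu> / 2 * (z \<bullet> z) \<le> z \<bullet> (L *v z)" if "ones \<bullet> z = 0" for z
      using min[OF that] by (simp add: S_form)
  qed
qed

section \<open>Exponential convergence of the switched system\<close>

lemma nonincreasing_of_derivative_nonpos:
  fixes f f' :: "real \<Rightarrow> real"
  assumes cont: "continuous_on {0..} f" and S: "locally_finite_set S"
    and deriv: "\<And>t. t > 0 \<Longrightarrow> t \<notin> S \<Longrightarrow> (f has_vector_derivative f' t) (at t)"
    and nonpos: "\<And>t. t \<ge> 0 \<Longrightarrow> f' t \<le> 0" and "T \<ge> 0"
  shows "f T \<le> f 0"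
proof -
  have "(f' has_integral (f T - f 0)) {0..T}"
  proof (rule fundamental_theorem_of_calculus_interior_strong)
    show "finite (S \<inter> {0..T})"
      using S unfolding locally_finite_set_def by blast
    show "(f has_vector_derivative f' t) (at t)" if "t \<in> {0<..<T} - S \<inter> {0..T}" for t
      using that by (intro deriv) auto
    show "continuous_on {0..T} f"
      using cont by (rule continuous_on_subset) auto
  qed fact
  then have "f T - f 0 \<le> 0"
    by (rule has_integral_le[OF _ has_integral_0]) (simp add: nonpos)
  then show ?thesis
    by simp
qed

lemma uniform_coercivity_constant:
  fixes Q :: "'k \<Rightarrow> 'a::real_inner \<Rightarrow> real"
  assumes "finite K" and "\<And>k. k \<in> K \<Longrightarrow> \<exists>c>0. \<forall>y. P y \<longrightarrow> c * (y \<bullet> y) \<le> Q k y"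
  obtains \<gamma> where "\<gamma> > 0" "\<And>k y. k \<in> K \<Longrightarrow> P y \<Longrightarrow> \<gamma> * (y \<bullet> y) \<le> Q k y"
proof -
  obtain c where c: "\<And>k. k \<in> K \<Longrightarrow> c k > 0 \<and> (\<forall>y. P y \<longrightarrow> c k * (y \<bullet> y) \<le> Q k y)"
    using assms(2) by metis
  define \<gamma> where "\<gamma> = Min (insert 1 (c ` K))"
  have "\<gamma> > 0"
    using \<open>finite K\<close> c by (simp add: \<gamma>_def)
  moreover have "\<gamma> * (y \<bullet> y) \<le> Q k y" if "k \<in> K" "P y" for k y
  proof -
    have "\<gamma> \<le> c k"
      using \<open>finite K\<close> that(1) by (simp add: \<gamma>_def)
    then have "\<gamma> * (y \<bullet> y) \<le> c k * (y \<bullet> y)"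
      by (simp add: mult_right_mono)
    also have "\<dots> \<le> Q k y"
      using c that by blast
    finally show ?thesis .
  qed
  ultimately show ?thesis
    by (rule that)
qed

locale coercive_switching =
  fixes L :: "nat \<Rightarrow> real^'n^'n" and \<sigma> :: "real \<Rightarrow> nat" and \<gamma> :: real
  assumes kernel: "\<And>t. t \<ge> 0 \<Longrightarrow> L (\<sigma> t) *v ones = 0"
    and kernel_transpose: "\<And>t. t \<ge> 0 \<Longrightarrow> transpose (L (\<sigma> t)) *v ones = 0"
    and coercivity_pos: "\<gamma> > 0"
    and coercive: "\<And>t y. t \<ge> 0 \<Longrightarrow> ones \<bullet> y = 0 \<Longrightarrow> \<gamma> * (y \<bullet> y) \<le> y \<bullet> (L (\<sigma> t) *v y)"
begin

context
  fixes x :: "real \<Rightarrow> real^'n"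
  assumes solution: "switched_solution L \<sigma> x"
begin

lemma continuous_solution: "continuous_on {0..} x"
  using solution unfolding switched_solution_def by blast

lemma solution_derivative:
  obtains S where "locally_finite_set S"
    "\<And>t. t > 0 \<Longrightarrow> t \<notin> S \<Longrightarrow> (x has_vector_derivative - (L (\<sigma> t) *v x t)) (at t)"
proof -
  obtain S where "locally_finite_set S" and deriv: "\<And>t. t \<ge> 0 \<Longrightarrow> t \<notin> S \<Longrightarrow>
      (x has_vector_derivative - (L (\<sigma> t) *v x t)) (at t within {0..})"
    using solution unfolding switched_solution_def by blast
  moreover have "at t within {0..} = at t" if "t > 0" for t :: real
    using that by (intro at_within_interior) simp
  ultimately show ?thesis
    using that by (metis less_imp_le)
qed

lemma inner_ones_conserved:
  assumes "T \<ge> 0"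
  shows "ones \<bullet> x T = ones \<bullet> x 0"
proof -
  obtain S where S: "locally_finite_set S"
    and deriv: "\<And>t. t > 0 \<Longrightarrow> t \<notin> S \<Longrightarrow> (x has_vector_derivative - (L (\<sigma> t) *v x t)) (at t)"
    by (rule solution_derivative) (rule that)
  have L_perp: "ones \<bullet> (L (\<sigma> t) *v y) = 0" if "t \<ge> 0" for t y
    using inner_matrix_vector_transpose[of "transpose (L (\<sigma> t))" ones y] kernel_transpose[OF that]
    by (simp del: transpose_matrix_vector add: inner_commute)
  have ones_deriv: "((\<lambda>t. ones \<bullet> x t) has_vector_derivative 0) (at t)" if "t > 0" "t \<notin> S" for t
    using bounded_linear.has_vector_derivative[OF bounded_linear_inner_right[of ones] deriv[OF that]]
      L_perp[of t "x t"] that by simp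
  have neg_deriv: "((\<lambda>t. - (ones \<bullet> x t)) has_vector_derivative 0) (at t)"
    if "t > 0" "t \<notin> S" for t
    using has_vector_derivative_minus[OF ones_deriv[OF that]] by simp
  have cont: "continuous_on {0..} (\<lambda>t. ones \<bullet> x t)"
    by (intro continuous_intros continuous_solution)
  have "ones \<bullet> x T \<le> ones \<bullet> x 0"
    by (rule nonincreasing_of_derivative_nonpos[OF cont S ones_deriv]) (simp_all add: assms)
  moreover have "- (ones \<bullet> x T) \<le> - (ones \<bullet> x 0)"
    by (rule nonincreasing_of_derivative_nonpos[OF _ S neg_deriv])
      (simp_all add: assms continuous_on_minus[OF cont])
  ultimately show ?thesis
    by linarith
qed

lemma disagreement_decay:
  assumes a: "a = c *\<^sub>R ones" and perp0: "ones \<bullet> (x 0 - a) = 0" and "T \<ge> 0"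
  shows "norm (x T - a) \<le> exp (- \<gamma> * T) * norm (x 0 - a)"
proof -
  obtain S where S: "locally_finite_set S"
    and deriv: "\<And>t. t > 0 \<Longrightarrow> t \<notin> S \<Longrightarrow> (x has_vector_derivative - (L (\<sigma> t) *v x t)) (at t)"
    by (rule solution_derivative) (rule that)
  define V where "V t = (x t - a) \<bullet> (x t - a)" for t
  define V' where "V' t = - 2 * ((x t - a) \<bullet> (L (\<sigma> t) *v (x t - a)))" for t
  have V_deriv: "(V has_vector_derivative V' t) (at t)" if "t > 0" "t \<notin> S" for t
  proof -
    have "L (\<sigma> t) *v a = 0"
      using kernel[of t] that(1) by (simp add: a matrix_vector_mult_scaleR)
    then have "L (\<sigma> t) *v x t = L (\<sigma> t) *v (x t - a)"
      by (simp add: matrix_vector_mult_diff_distrib)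
    moreover have "((\<lambda>t. x t - a) has_vector_derivative - (L (\<sigma> t) *v x t)) (at t)"
      using has_vector_derivative_diff[OF deriv[OF that] has_vector_derivative_const] by simp
    ultimately show ?thesis
      using bounded_bilinear.has_vector_derivative[OF bounded_bilinear_inner, of _ _ t UNIV]
      unfolding V_def V'_def by (fastforce simp: inner_commute)
  qed
  have exp_deriv: "((\<lambda>t. exp (2 * \<gamma> * t)) has_vector_derivative exp (2 * \<gamma> * t) * (2 * \<gamma>)) (at t)"
    for t
    unfolding has_real_derivative_iff_has_vector_derivative[symmetric]
    by (auto intro!: derivative_eq_intros)
  define W where "W t = exp (2 * \<gamma> * t) * V t" for t
  have "W T \<le> W 0"
  proof (rule nonincreasing_of_derivative_nonpos[OF _ S])
    show "continuous_on {0..} W"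
      unfolding W_def V_def by (intro continuous_intros continuous_solution)
    show "(W has_vector_derivative exp (2 * \<gamma> * t) * (2 * \<gamma> * V t + V' t)) (at t)"
      if "t > 0" "t \<notin> S" for t
      unfolding W_def
      by (rule has_vector_derivative_eq_rhs[OF has_vector_derivative_mult[OF exp_deriv V_deriv[OF that]]])
        (simp add: algebra_simps)
    show "exp (2 * \<gamma> * t) * (2 * \<gamma> * V t + V' t) \<le> 0" if "t \<ge> 0" for t
    proof -
      have "ones \<bullet> (x t - a) = 0"
        using inner_ones_conserved[OF that] perp0 by (simp add: inner_diff_right)
      then have "\<gamma> * V t \<le> (x t - a) \<bullet> (L (\<sigma> t) *v (x t - a))"
        unfolding V_def by (rule coercive[OF that])
      then show ?thesis
        by (simp add: V'_def mult_nonneg_nonpos)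
    qed
  qed fact
  then have "V T \<le> (exp (- \<gamma> * T))\<^sup>2 * V 0"
    by (simp add: W_def exp_minus field_simps power2_eq_square flip: exp_add)
  then have "(norm (x T - a))\<^sup>2 \<le> (exp (- \<gamma> * T) * norm (x 0 - a))\<^sup>2"
    by (simp add: V_def dot_square_norm power_mult_distrib)
  then show ?thesis
    by (rule power2_le_imp_le) simp
qed

lemma tendsto_average:
  "(x \<longlongrightarrow> (\<chi> i. (ones \<bullet> x 0) / of_nat CARD('n))) at_top"
proof -
  define c where "c = (ones \<bullet> x 0) / of_nat CARD('n)"
  define a :: "real^'n" where "a = (\<chi> i. c)"
  have a_ones: "a = c *\<^sub>R ones"
    by (simp add: a_def vec_eq_iff)
  have "ones \<bullet> (x 0 - a) = 0"
    by (simp add: a_def c_def inner_diff_right inner_vec_def sum_subtractf)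
  have bound: "norm (x T - a) \<le> exp (- \<gamma> * T) * norm (x 0 - a)" if "T \<ge> 0" for T
    using a_ones \<open>ones \<bullet> (x 0 - a) = 0\<close> that by (rule disagreement_decay)
  have "filterlim (\<lambda>T. - \<gamma> * T) at_bot at_top"
    using filterlim_tendsto_pos_mult_at_top[OF tendsto_const coercivity_pos filterlim_ident]
    by (simp add: filterlim_uminus_at_top)
  then have "((\<lambda>T. exp (- \<gamma> * T) * norm (x 0 - a)) \<longlongrightarrow> 0) at_top"
    by (rule tendsto_mult_left_zero[OF filterlim_compose[OF exp_at_bot]])
  moreover have "\<forall>\<^sub>F T in at_top. norm (x T - a) \<le> exp (- \<gamma> * T) * norm (x 0 - a)"
    by (rule eventually_at_top_linorderI[of 0]) (rule bound)
  ultimately have "((\<lambda>T. x T - a) \<longlongrightarrow> 0) at_top"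
    by (rule Lim_null_comparison[rotated])
  then show ?thesis
    by (simp add: LIM_zero_iff a_def c_def)
qed

end

end

theorem theorem7:
  fixes A :: "nat \<Rightarrow> real^'n^'n" and m :: nat
  assumes "\<forall>k\<in>{1..m}. EEP (- signed_laplacian (A k)) \<and> normal_matrix (- signed_laplacian (A k))"
  shows "consensus_set m (\<lambda>k. signed_laplacian (A k))"
  unfolding consensus_set_def
proof (intro allI impI)
  fix \<sigma> :: "real \<Rightarrow> nat" and x :: "real \<Rightarrow> real^'n"
  assume "switching_signal m \<sigma>" and sol: "switched_solution (\<lambda>k. signed_laplacian (A k)) \<sigma> x"
  then have mode: "\<sigma> t \<in> {1..m}" if "t \<ge> 0" for t
    using that unfolding switching_signal_def by blast
  obtain \<gamma> where "\<gamma> > 0" and \<gamma>: "\<And>k y. k \<in> {1..m} \<Longrightarrow> ones \<bullet> y = 0 \<Longrightarrow>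
      \<gamma> * (y \<bullet> y) \<le> y \<bullet> (signed_laplacian (A k) *v y)"
  proof (rule uniform_coercivity_constant)
    show "\<exists>c>0. \<forall>y. ones \<bullet> y = 0 \<longrightarrow> c * (y \<bullet> y) \<le> y \<bullet> (signed_laplacian (A k) *v y)"
      if "k \<in> {1..m}" for k
      using coercive_on_perp_ones[OF signed_laplacian_ones] assms that by metis
  qed auto
  have "transpose (signed_laplacian (A k)) *v ones = 0" if "k \<in> {1..m}" for k
    using assms that signed_laplacian_transpose_ones by blast
  then interpret coercive_switching "\<lambda>k. signed_laplacian (A k)" \<sigma> \<gamma>
    using \<open>\<gamma> > 0\<close> \<gamma> mode by unfold_locales (simp_all add: signed_laplacian_ones)
  show "\<exists>\<alpha>. (x \<longlongrightarrow> (\<chi> i. \<alpha>)) at_top"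
    using tendsto_average[OF sol] by blast
qed

end
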